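(* (a) If $Y,Z$ are CFG-spaces contained (as metric subspaces) in a metric space $X$ over a Boolean ring $B$, then $Y\cap Z$ is a CFG-space. (b) If $f:X\to Y$ is a contractive map between CFG-spaces over $B$ and $Z\subseteq Y$ is a CFG-space, then $f^{-1}(Z)$ is a CFG-space.
   Context: $B$ is a Boolean ring ($a\vee b=a+b+ab$, $a\le b\iff ab=a$; $a_1\oplus\cdots\oplus a_n$ denotes a sum of pairwise disjoint elements). A Boolean metric space over $B$: set $X$ with $d:X\times X\to B$, $d(x,y)=0\iff x=y$, symmetric, $d(x,z)\le d(x,y)\vee d(y,z)$; subsets carry the restricted metric. For $x_1,\dots,x_n\in X$, $a_i\in B$ with $a_1\oplus\cdots\oplus a_n=1$, $x$ is a convex combination of the $x_i$ with coefficients $a_i$ if $a_id(x,x_i)=0$ for all $i$. A CFG-space is a space in which all such combinations exist and every element is a convex combination of elements of some fixed finite subset (the empty space counts). A map $f$ is contractive if $d(f(x),f(y))\le d(x,y)$. *)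

theory Defs
  imports Main
begin

text \<open>A Boolean ring: every element is idempotent (such rings are automatically
commutative, so we work over a commutative unital ring type).\<close>
definition boolean_ring :: "'b::comm_ring_1 itself \<Rightarrow> bool" where
  "boolean_ring _ \<longleftrightarrow> (\<forall>a::'b. a * a = a)"

definition bjoin :: "'b::comm_ring_1 \<Rightarrow> 'b \<Rightarrow> 'b" where
  "bjoin a b = a + b + a * b"

definition ble :: "'b::comm_ring_1 \<Rightarrow> 'b \<Rightarrow> bool" where
  "ble a b \<longleftrightarrow> a * b = a"

definition bmetric :: "'a set \<Rightarrow> ('a \<Rightarrow> 'a \<Rightarrow> 'b::comm_ring_1) \<Rightarrow> bool" where
  "bmetric X d \<longleftrightarrow>
     (\<forall>x\<in>X. \<forall>y\<in>X. d x y = 0 \<longleftrightarrow> x = y) \<and>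
     (\<forall>x\<in>X. \<forall>y\<in>X. d x y = d y x) \<and>
     (\<forall>x\<in>X. \<forall>y\<in>X. \<forall>z\<in>X. ble (d x z) (bjoin (d x y) (d y z)))"

text \<open>a_1 \<oplus> ... \<oplus> a_n = 1: pairwise disjoint elements (n \<ge> 1) summing to 1.\<close>
definition disj_partition :: "nat \<Rightarrow> (nat \<Rightarrow> 'b::comm_ring_1) \<Rightarrow> bool" where
  "disj_partition n a \<longleftrightarrow> 0 < n \<and>
     (\<forall>i<n. \<forall>j<n. i \<noteq> j \<longrightarrow> a i * a j = 0) \<and> (\<Sum>i<n. a i) = 1"

definition convex_comb ::
  "('a \<Rightarrow> 'a \<Rightarrow> 'b::comm_ring_1) \<Rightarrow> 'a \<Rightarrow> nat \<Rightarrow> (nat \<Rightarrow> 'a) \<Rightarrow> (nat \<Rightarrow> 'b) \<Rightarrow> bool" where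
  "convex_comb d x n xs a \<longleftrightarrow> (\<forall>i<n. a i * d x (xs i) = 0)"

definition cfg_space :: "'a set \<Rightarrow> ('a \<Rightarrow> 'a \<Rightarrow> 'b::comm_ring_1) \<Rightarrow> bool" where
  "cfg_space S d \<longleftrightarrow> bmetric S d \<and>
     (\<forall>n xs a. disj_partition n a \<and> (\<forall>i<n. xs i \<in> S) \<longrightarrow>
        (\<exists>x\<in>S. convex_comb d x n xs a)) \<and>
     (\<exists>F. finite F \<and> F \<subseteq> S \<and>
        (\<forall>x\<in>S. \<exists>n xs a. disj_partition n a \<and> (\<forall>i<n. xs i \<in> F) \<and> convex_comb d x n xs a))"

definition contractive ::
  "'a set \<Rightarrow> ('a \<Rightarrow> 'a \<Rightarrow> 'b::comm_ring_1) \<Rightarrow> ('c \<Rightarrow> 'c \<Rightarrow> 'b) \<Rightarrow> ('a \<Rightarrow> 'c) \<Rightarrow> bool" where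
  "contractive X dX dY f \<longleftrightarrow> (\<forall>x\<in>X. \<forall>y\<in>X. ble (dY (f x) (f y)) (dX x y))"

end

theory Submission
  imports Defs
begin

(* Both parts are instances of one statement about preimages:
   if f : X1 -> Y1 is contractive, X1 and Z1 \<subseteq> Y1 are CFG-spaces and Y1 is merely a
   Boolean metric space, then f^{-1}(Z1) is a CFG-space.  Part (b) is this statement
   directly; part (a) is the case f = id : Y -> X (the identity is contractive because
   every element of a Boolean ring is idempotent), whose preimage of Z is Y \<inter> Z.
   The preimage statement has three ingredients:
   - closure under convex combinations: combinations are unique in a Boolean metric
     space and contractive maps preserve them, so f maps the combination formed in X1
     onto the one formed in Z1;
   - gluing: for y \<in> X1 and z \<in> Z1 there is a point p of the preimage agreeing with y
     on the part 1 - d(f y, z) where f y and z coincide (mix y with a fixed point w0 of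
     the preimage, and z with f w0);
   - finite generation: if w is a combination of generators y_i of X1 and f w one of
     generators z_j of Z1, then w is the combination of the glued points p(y_i, z_j)
     with the product coefficients a_i b_j. *)

definition comb_of :: "('a \<Rightarrow> 'a \<Rightarrow> 'b::comm_ring_1) \<Rightarrow> 'a set \<Rightarrow> 'a \<Rightarrow> bool" where
  "comb_of d F x \<longleftrightarrow> (\<exists>n xs a. disj_partition n a \<and> (\<forall>i<n. xs i \<in> F) \<and> convex_comb d x n xs a)"

definition disj_partition_on :: "'i set \<Rightarrow> ('i \<Rightarrow> 'b::comm_ring_1) \<Rightarrow> bool" where
  "disj_partition_on I c \<longleftrightarrow> finite I \<and> I \<noteq> {} \<and>
     (\<forall>i\<in>I. \<forall>j\<in>I. i \<noteq> j \<longrightarrow> c i * c j = 0) \<and> sum c I = 1"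

lemma cfg_space_iff:
  "cfg_space S d \<longleftrightarrow> bmetric S d \<and>
     (\<forall>n xs a. disj_partition n a \<and> (\<forall>i<n. xs i \<in> S) \<longrightarrow> (\<exists>x\<in>S. convex_comb d x n xs a)) \<and>
     (\<exists>F. finite F \<and> F \<subseteq> S \<and> (\<forall>x\<in>S. comb_of d F x))"
  unfolding cfg_space_def comb_of_def ..

lemma cfg_spaceI:
  fixes d :: "'a \<Rightarrow> 'a \<Rightarrow> 'b::comm_ring_1"
  assumes "bmetric S d"
    and "\<And>n xs (a :: nat \<Rightarrow> 'b). disj_partition n a \<Longrightarrow> \<forall>i<n. xs i \<in> S \<Longrightarrow> \<exists>x\<in>S. convex_comb d x n xs a"
    and "finite F" "F \<subseteq> S" "\<And>x. x \<in> S \<Longrightarrow> comb_of d F x"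
  shows "cfg_space S d"
  unfolding cfg_space_iff
proof (intro conjI allI impI)
  fix n xs and a :: "nat \<Rightarrow> 'b" assume "disj_partition n a \<and> (\<forall>i<n. xs i \<in> S)"
  then show "\<exists>x\<in>S. convex_comb d x n xs a" using assms(2) by blast
next
  show "\<exists>F. finite F \<and> F \<subseteq> S \<and> (\<forall>x\<in>S. comb_of d F x)" using assms(3-5) by blast
qed (rule assms(1))

lemma cfg_space_bmetric: "cfg_space S d \<Longrightarrow> bmetric S d"
  unfolding cfg_space_def by simp

lemma cfg_space_comb_exists:
  "cfg_space S d \<Longrightarrow> disj_partition n a \<Longrightarrow> \<forall>i<n. xs i \<in> S \<Longrightarrow> \<exists>x\<in>S. convex_comb d x n xs a"
  unfolding cfg_space_def by blast

lemma cfg_space_generators: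
  "cfg_space S d \<Longrightarrow> \<exists>F. finite F \<and> F \<subseteq> S \<and> (\<forall>x\<in>S. comb_of d F x)"
  unfolding cfg_space_iff by blast

lemma comb_of_partition_on:
  assumes "disj_partition_on I c" and "\<forall>i\<in>I. g i \<in> F \<and> c i * d x (g i) = 0"
  shows "comb_of d F x"
proof -
  have I: "finite I" "I \<noteq> {}" using assms(1) unfolding disj_partition_on_def by auto
  obtain h where h: "bij_betw h {..<card I} I"
    using ex_bij_betw_nat_finite[OF I(1)] by (auto simp: lessThan_atLeast0)
  have hI: "h i \<in> I" if "i < card I" for i using h that unfolding bij_betw_def by auto
  have "disj_partition (card I) (c \<circ> h)"
    unfolding disj_partition_def
  proof (intro conjI allI impI)
    show "0 < card I" using I by (simp add: card_gt_0_iff)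
    fix i j assume "i < card I" "j < card I" "i \<noteq> j"
    then have "h i \<noteq> h j" using h unfolding bij_betw_def inj_on_def by auto
    then show "(c \<circ> h) i * (c \<circ> h) j = 0"
      using assms(1) hI \<open>i < card I\<close> \<open>j < card I\<close> unfolding disj_partition_on_def by auto
  next
    show "(\<Sum>i<card I. (c \<circ> h) i) = 1"
      using sum.reindex_bij_betw[OF h, of c] assms(1) unfolding disj_partition_on_def by simp
  qed
  moreover have "\<forall>i<card I. (g \<circ> h) i \<in> F" "convex_comb d x (card I) (g \<circ> h) (c \<circ> h)"
    using hI assms(2) unfolding convex_comb_def by auto
  ultimately show ?thesis unfolding comb_of_def by blast
qed

lemma disj_partition_product:
  assumes a: "disj_partition n1 a" and b: "disj_partition n2 b"
  shows "disj_partition_on ({..<n1} \<times> {..<n2}) (\<lambda>(i, j). a i * b j)"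
  unfolding disj_partition_on_def
proof (intro conjI ballI impI)
  show "{..<n1} \<times> {..<n2} \<noteq> {}" using a b unfolding disj_partition_def by auto
next
  fix p q assume p: "p \<in> {..<n1} \<times> {..<n2}" and q: "q \<in> {..<n1} \<times> {..<n2}" and "p \<noteq> q"
  obtain i j i' j' where pq: "p = (i, j)" "q = (i', j')" by fastforce
  have "a i * a i' = 0 \<or> b j * b j' = 0"
    using a b p q pq \<open>p \<noteq> q\<close> unfolding disj_partition_def by auto
  then have "(a i * a i') * (b j * b j') = 0" by auto
  then show "(\<lambda>(i, j). a i * b j) p * (\<lambda>(i, j). a i * b j) q = 0"
    unfolding pq by (simp add: algebra_simps)
next
  have "sum (\<lambda>(i, j). a i * b j) ({..<n1} \<times> {..<n2}) = (\<Sum>i<n1. a i) * (\<Sum>j<n2. b j)"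
    by (simp add: sum.cartesian_product sum_product)
  then show "sum (\<lambda>(i, j). a i * b j) ({..<n1} \<times> {..<n2}) = 1"
    using a b unfolding disj_partition_def by simp
qed simp

text \<open>Reading "c * d x y = 0" as "x and y agree on the part c", the following lemmas
  say that agreement is transitive, symmetric, preserved by contractions, and that
  agreement on complementary parts forces equality.\<close>

lemma annihilates_join:
  fixes c p q r :: "'b::comm_ring_1"
  assumes "c * p = 0" "c * q = 0" "ble r (bjoin p q)"
  shows "c * r = 0"
proof -
  have "c * r = c * (r * (p + q + p * q))" using assms(3) by (simp add: ble_def bjoin_def)
  also have "\<dots> = r * (c * p) + r * (c * q) + r * (c * p) * q" by (simp add: algebra_simps)
  finally show ?thesis using assms(1,2) by simp
qed

lemma agree_trans:
  assumes "bmetric S d" "x \<in> S" "y \<in> S" "z \<in> S" "c * d x y = 0" "c * d y z = 0"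
  shows "c * d x z = 0"
  using assms annihilates_join[of c "d x y" "d y z" "d x z"] unfolding bmetric_def by blast

lemma bmetric_sym: "bmetric S d \<Longrightarrow> x \<in> S \<Longrightarrow> y \<in> S \<Longrightarrow> d x y = d y x"
  unfolding bmetric_def by blast

lemma bmetric_eq: "bmetric S d \<Longrightarrow> x \<in> S \<Longrightarrow> y \<in> S \<Longrightarrow> d x y = 0 \<Longrightarrow> x = y"
  unfolding bmetric_def by blast

lemma bmetric_subset: "bmetric X d \<Longrightarrow> S \<subseteq> X \<Longrightarrow> bmetric S d"
  unfolding bmetric_def by blast

lemma zero_by_complements:
  fixes e u :: "'b::comm_ring_1"
  assumes "e * u = 0" "(1 - e) * u = 0"
  shows "u = 0"
proof -
  have "u = e * u + (1 - e) * u" by (simp add: algebra_simps)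
  then show ?thesis using assms by simp
qed

lemma boolean_complement:
  fixes e :: "'b::comm_ring_1"
  assumes "boolean_ring TYPE('b)"
  shows "(1 - e) * e = 0"
  using assms unfolding boolean_ring_def by (simp add: algebra_simps)

lemma contractive_agree:
  assumes "contractive X dX dY f" "x \<in> X" "y \<in> X" "c * dX x y = 0"
  shows "c * dY (f x) (f y) = 0"
proof -
  have "dY (f x) (f y) * dX x y = dY (f x) (f y)"
    using assms(1-3) unfolding contractive_def ble_def by blast
  then have "c * dY (f x) (f y) = dY (f x) (f y) * (c * dX x y)" by (metis mult.assoc mult.commute)
  then show ?thesis using assms(4) by simp
qed

text \<open>Over a Boolean ring the identity is contractive, since d x y \<le> d x y is
  idempotency; this reduces intersections to preimages.\<close>
lemma id_contractive:
  fixes d :: "'a \<Rightarrow> 'a \<Rightarrow> 'b::comm_ring_1"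
  assumes "boolean_ring TYPE('b)"
  shows "contractive S d d id"
  using assms unfolding contractive_def ble_def boolean_ring_def by simp

text \<open>Convex combinations are unique: two combinations with the same data agree on
  every part a_i, hence on their sum 1.\<close>
lemma convex_comb_unique:
  assumes S: "bmetric S d" and "x \<in> S" "x' \<in> S" "\<forall>i<n. xs i \<in> S" "disj_partition n a"
    and "convex_comb d x n xs a" "convex_comb d x' n xs a"
  shows "x = x'"
proof -
  have "a i * d x x' = 0" if i: "i < n" for i
  proof -
    have "a i * d x (xs i) = 0" "a i * d x' (xs i) = 0"
      using assms(6,7) i unfolding convex_comb_def by auto
    then show ?thesis
      using agree_trans[OF S \<open>x \<in> S\<close> _ \<open>x' \<in> S\<close>] bmetric_sym[OF S] assms(3,4) i by metis
  qed
  then have "(\<Sum>i<n. a i) * d x x' = 0" by (simp add: sum_distrib_right)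
  then have "d x x' = 0" using assms(5) unfolding disj_partition_def by simp
  then show ?thesis using bmetric_eq[OF S assms(2,3)] by blast
qed

lemma cfg_space_mix:
  fixes d :: "'a \<Rightarrow> 'a \<Rightarrow> 'b::comm_ring_1"
  assumes B: "boolean_ring TYPE('b)" and S: "cfg_space S d" and "y \<in> S" "w \<in> S"
  shows "\<exists>p\<in>S. e * d p y = 0 \<and> (1 - e) * d p w = 0"
proof -
  define xs where "xs = (\<lambda>i::nat. if i = 0 then y else w)"
  define a where "a = (\<lambda>i::nat. if i = 0 then e else 1 - e)"
  have two: "i < 2 \<longleftrightarrow> i = 0 \<or> i = 1" for i :: nat by arith
  have "disj_partition 2 a"
    unfolding disj_partition_def
  proof (intro conjI allI impI)
    fix i j :: nat assume "i < 2" "j < 2" "i \<noteq> j"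
    then show "a i * a j = 0"
      using boolean_complement[OF B, of e] unfolding a_def two by (auto simp: mult.commute)
  qed (simp_all add: a_def numeral_2_eq_2 lessThan_Suc)
  moreover have "\<forall>i<2. xs i \<in> S" using assms(3,4) unfolding xs_def two by auto
  ultimately obtain p where p: "p \<in> S" "convex_comb d p 2 xs a"
    using cfg_space_comb_exists[OF S] by blast
  then have "a 0 * d p (xs 0) = 0" "a 1 * d p (xs 1) = 0" unfolding convex_comb_def by auto
  then show ?thesis using p(1) unfolding a_def xs_def by auto
qed

section \<open>Preimages of CFG-subspaces under contractive maps\<close>

context
  fixes X1 :: "'c set" and d1 :: "'c \<Rightarrow> 'c \<Rightarrow> 'b::comm_ring_1"
    and Y1 Z1 :: "'e set" and d2 :: "'e \<Rightarrow> 'e \<Rightarrow> 'b" and f :: "'c \<Rightarrow> 'e"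
  assumes B: "boolean_ring TYPE('b)" and X1: "cfg_space X1 d1" and Y1: "bmetric Y1 d2"
    and fX1: "f ` X1 \<subseteq> Y1" and contr: "contractive X1 d1 d2 f"
    and Z1Y1: "Z1 \<subseteq> Y1" and Z1: "cfg_space Z1 d2"
begin

lemma X1_bmetric: "bmetric X1 d1"
  using cfg_space_bmetric[OF X1] .

lemma preimage_comb_exists:
  assumes a: "disj_partition n a" and xs: "\<forall>i<n. xs i \<in> X1 \<and> f (xs i) \<in> Z1"
  shows "\<exists>x\<in>{x \<in> X1. f x \<in> Z1}. convex_comb d1 x n xs a"
proof -
  obtain x where x: "x \<in> X1" "convex_comb d1 x n xs a"
    using cfg_space_comb_exists[OF X1 a] xs by blast
  obtain z where z: "z \<in> Z1" "convex_comb d2 z n (f \<circ> xs) a"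
    using cfg_space_comb_exists[OF Z1 a, of "f \<circ> xs"] xs by auto
  have "convex_comb d2 (f x) n (f \<circ> xs) a"
    using x xs contractive_agree[OF contr x(1)] unfolding convex_comb_def by simp
  then have "f x = z"
    using convex_comb_unique[OF Y1 _ _ _ a _ z(2)] x(1) z(1) xs fX1 Z1Y1 by auto
  then show ?thesis using x z by blast
qed

lemma preimage_glue:
  assumes y: "y \<in> X1" and z: "z \<in> Z1" and w0: "w0 \<in> X1" "f w0 \<in> Z1"
  shows "\<exists>p. p \<in> X1 \<and> f p \<in> Z1 \<and> (1 - d2 (f y) z) * d1 p y = 0"
proof -
  define e where "e = 1 - d2 (f y) z"
  obtain p where p: "p \<in> X1" "e * d1 p y = 0" "(1 - e) * d1 p w0 = 0"
    using cfg_space_mix[OF B X1 y w0(1)] by blast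
  obtain q where q: "q \<in> Z1" "e * d2 q z = 0" "(1 - e) * d2 q (f w0) = 0"
    using cfg_space_mix[OF B Z1 z w0(2)] by blast
  have inY1: "f p \<in> Y1" "q \<in> Y1" "f y \<in> Y1" "z \<in> Y1" "f w0 \<in> Y1"
    using p q y z w0 fX1 Z1Y1 by auto
  note trans = agree_trans[OF Y1] and sym = bmetric_sym[OF Y1]
  have "e * d2 (f y) z = 0"
    using boolean_complement[OF B, of "d2 (f y) z"] unfolding e_def by (simp add: mult.commute)
  then have "e * d2 (f y) q = 0" using trans[of "f y" z q] q(2) sym inY1 by simp
  then have on_e: "e * d2 (f p) q = 0"
    using trans[of "f p" "f y" q] contractive_agree[OF contr p(1) y p(2)] inY1 by simp
  have on_compl: "(1 - e) * d2 (f p) q = 0"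
    using trans[of "f p" "f w0" q] contractive_agree[OF contr p(1) w0(1) p(3)] q(3) sym inY1
    by simp
  have "f p = q"
    using bmetric_eq[OF Y1] zero_by_complements[OF on_e on_compl] inY1 by blast
  then show ?thesis using p q(1) unfolding e_def by auto
qed

lemma glued_point_agrees:
  assumes w: "w \<in> X1" and y: "y \<in> X1" and p: "p \<in> X1" and z: "z \<in> Z1"
    and wy: "c * d1 w y = 0" and wz: "c * d2 (f w) z = 0"
    and glue: "(1 - d2 (f y) z) * d1 p y = 0"
  shows "c * d1 w p = 0"
proof -
  have inY1: "f y \<in> Y1" "f w \<in> Y1" "z \<in> Y1" using w y z fX1 Z1Y1 by auto
  have "c * d2 (f y) (f w) = 0"
    using contractive_agree[OF contr w y wy] bmetric_sym[OF Y1] inY1 by simp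
  then have "c * d2 (f y) z = 0" using agree_trans[OF Y1 _ _ _ _ wz] inY1 by blast
  then have "c * d1 p y = (c * (1 - d2 (f y) z)) * d1 p y" by (simp add: algebra_simps)
  then have "c * d1 y p = 0"
    using glue bmetric_sym[OF X1_bmetric y p] by (simp add: mult.assoc)
  then show ?thesis using agree_trans[OF X1_bmetric w y p wy] by blast
qed

text \<open>The glued points over the generators of X1 and Z1 generate the preimage.\<close>
lemma preimage_generators:
  "\<exists>F. finite F \<and> F \<subseteq> {x \<in> X1. f x \<in> Z1} \<and> (\<forall>x\<in>{x \<in> X1. f x \<in> Z1}. comb_of d1 F x)"
proof (cases "{x \<in> X1. f x \<in> Z1} = {}")
  case True
  then show ?thesis by auto
next
  case False
  then obtain w0 where w0: "w0 \<in> X1" "f w0 \<in> Z1" by blast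
  obtain FX where FX: "finite FX" "FX \<subseteq> X1" "\<forall>x\<in>X1. comb_of d1 FX x"
    using cfg_space_generators[OF X1] by blast
  obtain FZ where FZ: "finite FZ" "FZ \<subseteq> Z1" "\<forall>z\<in>Z1. comb_of d2 FZ z"
    using cfg_space_generators[OF Z1] by blast
  define P where "P y z = (SOME p. p \<in> X1 \<and> f p \<in> Z1 \<and> (1 - d2 (f y) z) * d1 p y = 0)" for y z
  have P: "P y z \<in> X1 \<and> f (P y z) \<in> Z1 \<and> (1 - d2 (f y) z) * d1 (P y z) y = 0"
    if "y \<in> X1" "z \<in> Z1" for y z
    unfolding P_def by (rule someI_ex[OF preimage_glue[OF that w0]])
  define F where "F = (\<lambda>(y, z). P y z) ` (FX \<times> FZ)"
  have generates: "comb_of d1 F w" if w: "w \<in> X1" "f w \<in> Z1" for w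
  proof -
    obtain n1 xs1 a where a: "disj_partition n1 a" "\<forall>i<n1. xs1 i \<in> FX" "convex_comb d1 w n1 xs1 a"
      using FX(3) w(1) unfolding comb_of_def by blast
    obtain n2 xs2 b where b: "disj_partition n2 b" "\<forall>j<n2. xs2 j \<in> FZ" "convex_comb d2 (f w) n2 xs2 b"
      using FZ(3) w(2) unfolding comb_of_def by blast
    have "\<forall>(i, j)\<in>{..<n1} \<times> {..<n2}.
            P (xs1 i) (xs2 j) \<in> F \<and> a i * b j * d1 w (P (xs1 i) (xs2 j)) = 0"
    proof (clarify)
      fix i j assume ij: "i < n1" "j < n2"
      have gens: "xs1 i \<in> FX" "xs2 j \<in> FZ" using a(2) b(2) ij by auto
      then have y: "xs1 i \<in> X1" and z: "xs2 j \<in> Z1" using FX(2) FZ(2) by auto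
      have "a i * d1 w (xs1 i) = 0" "b j * d2 (f w) (xs2 j) = 0"
        using a(3) b(3) ij unfolding convex_comb_def by auto
      then have wy: "a i * b j * d1 w (xs1 i) = 0" and wz: "a i * b j * d2 (f w) (xs2 j) = 0"
        by (metis mult.assoc mult.commute mult_zero_right, metis mult.assoc mult_zero_right)
      note p = P[OF y z]
      have "P (xs1 i) (xs2 j) \<in> F"
        unfolding F_def by (rule image_eqI[of _ _ "(xs1 i, xs2 j)"]) (simp_all add: gens)
      with glued_point_agrees[OF w(1) y conjunct1[OF p] z wy wz] p
      show "P (xs1 i) (xs2 j) \<in> F \<and> a i * b j * d1 w (P (xs1 i) (xs2 j)) = 0" by blast
    qed
    then show ?thesis
      by (intro comb_of_partition_on[OF disj_partition_product[OF a(1) b(1)],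
              of "\<lambda>(i, j). P (xs1 i) (xs2 j)"]) (simp add: split_beta)
  qed
  have "F \<subseteq> {x \<in> X1. f x \<in> Z1}" using P FX(2) FZ(2) unfolding F_def by auto
  moreover have "finite F" using FX(1) FZ(1) unfolding F_def by simp
  ultimately show ?thesis using generates by (intro exI[of _ F]) simp
qed

theorem preimage_cfg_space: "cfg_space {x \<in> X1. f x \<in> Z1} d1"
proof -
  obtain F where F: "finite F" "F \<subseteq> {x \<in> X1. f x \<in> Z1}"
    "\<forall>x\<in>{x \<in> X1. f x \<in> Z1}. comb_of d1 F x"
    using preimage_generators by blast
  show ?thesis
  proof (rule cfg_spaceI[OF _ _ F(1,2)])
    show "bmetric {x \<in> X1. f x \<in> Z1} d1" by (rule bmetric_subset[OF X1_bmetric]) auto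
    show "\<exists>x\<in>{x \<in> X1. f x \<in> Z1}. convex_comb d1 x n xs a"
      if "disj_partition n a" "\<forall>i<n. xs i \<in> {x \<in> X1. f x \<in> Z1}" for n xs a
      using preimage_comb_exists[OF that(1)] that(2) by simp
  qed (use F(3) in simp)
qed

end

theorem mainTheorem8:
  fixes X Y Z :: "'a set" and d :: "'a \<Rightarrow> 'a \<Rightarrow> 'b::comm_ring_1"
    and X1 :: "'c set" and d1 :: "'c \<Rightarrow> 'c \<Rightarrow> 'b"
    and Y1 Z1 :: "'e set" and d2 :: "'e \<Rightarrow> 'e \<Rightarrow> 'b"
    and f :: "'c \<Rightarrow> 'e"
  assumes B: "boolean_ring TYPE('b)"
  shows "((bmetric X d \<and> Y \<subseteq> X \<and> Z \<subseteq> X \<and> cfg_space Y d \<and> cfg_space Z d)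
           \<longrightarrow> cfg_space (Y \<inter> Z) d)
       \<and> ((cfg_space X1 d1 \<and> cfg_space Y1 d2 \<and> f ` X1 \<subseteq> Y1 \<and> contractive X1 d1 d2 f \<and>
           Z1 \<subseteq> Y1 \<and> cfg_space Z1 d2)
           \<longrightarrow> cfg_space {x \<in> X1. f x \<in> Z1} d1)"
proof (intro conjI impI)
  assume "bmetric X d \<and> Y \<subseteq> X \<and> Z \<subseteq> X \<and> cfg_space Y d \<and> cfg_space Z d"
  then have X: "bmetric X d" and "Y \<subseteq> X" "Z \<subseteq> X" "cfg_space Y d" "cfg_space Z d" by simp_all
  then have "cfg_space {x \<in> Y. id x \<in> Z} d"
    by (intro preimage_cfg_space[OF B _ X _ id_contractive[OF B]]) auto
  moreover have "{x \<in> Y. id x \<in> Z} = Y \<inter> Z" by auto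
  ultimately show "cfg_space (Y \<inter> Z) d" by simp
next
  assume "cfg_space X1 d1 \<and> cfg_space Y1 d2 \<and> f ` X1 \<subseteq> Y1 \<and> contractive X1 d1 d2 f \<and>
    Z1 \<subseteq> Y1 \<and> cfg_space Z1 d2"
  then show "cfg_space {x \<in> X1. f x \<in> Z1} d1"
    by (intro preimage_cfg_space[OF B _ cfg_space_bmetric]) auto
qed

end
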